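(* Let $1\le p,q<\infty$ and $g\in\mathcal{H}(\mathbb{D})$. The operator $S_g(f)(z)=\int_0^z f'(\zeta)g(\zeta)\,d\zeta$ is bounded on $RM(p,q)$ if and only if $g\in H^\infty$.
   Context: $\mathcal{H}(\mathbb{D})$ denotes the analytic functions on the unit disc $\mathbb{D}$, $H^\infty$ the bounded ones. For $1\le p,q<\infty$, $RM(p,q)$ is the Banach space of $f\in\mathcal{H}(\mathbb{D})$ with $\|f\|_{RM(p,q)}=\left(\frac1{2\pi}\int_0^{2\pi}\left(\int_0^1|f(re^{i\theta})|^p\,dr\right)^{q/p}d\theta\right)^{1/q}<\infty$. *)

theory Defs
  imports "HOL-Complex_Analysis.Complex_Analysis"
begin

definition ennpow :: "ennreal \<Rightarrow> real \<Rightarrow> ennreal" where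
  "ennpow x a = (if x = \<infinity> then \<infinity> else ennreal (enn2real x powr a))"

definition rm_inner :: "real \<Rightarrow> (complex \<Rightarrow> complex) \<Rightarrow> real \<Rightarrow> ennreal" where
  "rm_inner p f \<theta> = (\<integral>\<^sup>+ r\<in>{0..<1}. ennreal (norm (f (of_real r * cis \<theta>)) powr p) \<partial>lborel)"

definition rm_norm :: "real \<Rightarrow> real \<Rightarrow> (complex \<Rightarrow> complex) \<Rightarrow> ennreal" where
  "rm_norm p q f = ennpow (ennreal (1 / (2 * pi)) *
      (\<integral>\<^sup>+ \<theta>\<in>{0..2*pi}. ennpow (rm_inner p f \<theta>) (q / p) \<partial>lborel)) (1 / q)"

definition RM :: "real \<Rightarrow> real \<Rightarrow> (complex \<Rightarrow> complex) set" where
  "RM p q = {f. f holomorphic_on ball 0 1 \<and> rm_norm p q f < \<infinity>}"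

definition bounded_on_RM :: "real \<Rightarrow> real \<Rightarrow> ((complex \<Rightarrow> complex) \<Rightarrow> (complex \<Rightarrow> complex)) \<Rightarrow> bool" where
  "bounded_on_RM p q T \<longleftrightarrow> (\<forall>f\<in>RM p q. T f \<in> RM p q) \<and>
     (\<exists>C\<ge>0. \<forall>f\<in>RM p q. rm_norm p q (T f) \<le> ennreal C * rm_norm p q f)"

definition S_op :: "(complex \<Rightarrow> complex) \<Rightarrow> (complex \<Rightarrow> complex) \<Rightarrow> complex \<Rightarrow> complex" where
  "S_op g f z = contour_integral (linepath 0 z) (\<lambda>\<zeta>. deriv f \<zeta> * g \<zeta>)"

end

theory Submission
  imports Defs
begin

text \<open>
  Necessity: point evaluation of the derivative at any \<open>a \<in> \<bbbD>\<close> is a bounded functional on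
  \<open>RM(p,q)\<close> (Cauchy's estimate on circles, averaged over the radius). The iterates
  \<open>S\<^sub>g\<^sup>k z\<close> have derivative \<open>g\<^sup>k\<close> and norm at most \<open>\<parallel>S\<^sub>g\<parallel>\<^sup>k \<parallel>z\<parallel>\<close>, so \<open>\<bar>g(a)\<bar>\<^sup>k \<lesssim> \<parallel>S\<^sub>g\<parallel>\<^sup>k\<close>
  for all \<open>k\<close>, which forces \<open>\<bar>g(a)\<bar> \<le> \<parallel>S\<^sub>g\<parallel>\<close>.

  Sufficiency: integrating by parts along each radius, \<open>S\<^sub>g f = f g - f(0) g(0) - \<integral> f g'\<close>.
  With \<open>\<bar>g'(z)\<bar> \<le> 2 \<parallel>g\<parallel>\<^sub>\<infinity> / (1 - \<bar>z\<bar>)\<close>, Hardy's inequality for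
  \<open>\<phi> \<mapsto> \<integral>\<^sub>0\<^sup>r \<phi>(s)/(1 - s) ds\<close> on \<open>L\<^sup>p(0,1)\<close> bounds the radial \<open>L\<^sup>p\<close> norm of \<open>S\<^sub>g f\<close> by that
  of \<open>f\<close> plus \<open>\<bar>f(0)\<bar>\<close>, and \<open>\<bar>f(0)\<bar>\<close> is again controlled by the \<open>RM(p,q)\<close> norm.
\<close>

lemma ennpow_ennreal: "0 \<le> x \<Longrightarrow> ennpow (ennreal x) a = ennreal (x powr a)"
  by (simp add: ennpow_def)

lemma ennpow_top [simp]: "ennpow top a = top"
  by (simp add: ennpow_def)

lemma ennpow_0 [simp]: "ennpow 0 a = 0"
  by (simp add: ennpow_def)

lemma ennpow_1 [simp]: "ennpow x 1 = x"
  by (cases x) (auto simp: ennpow_def)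

lemma ennpow_one [simp]: "ennpow 1 a = 1"
  by (simp add: ennpow_def)

lemma ennpow_eq_0_iff: "0 < a \<Longrightarrow> ennpow x a = 0 \<longleftrightarrow> x = 0"
  by (cases x) (auto simp: ennpow_def)

lemma ennpow_pos: "x \<noteq> 0 \<Longrightarrow> 0 < ennpow x a"
  by (cases x) (auto simp: ennpow_def)

lemma ennpow_less_top_iff: "ennpow x a < \<infinity> \<longleftrightarrow> x < \<infinity>"
  by (cases x) (auto simp: ennpow_def)

lemma ennpow_mono:
  assumes "x \<le> y" "0 \<le> a"
  shows "ennpow x a \<le> ennpow y a"
proof (cases "y = \<infinity>")
  case False
  then obtain y' where y: "y = ennreal y'" "0 \<le> y'" by (cases y) auto
  with assms obtain x' where x: "x = ennreal x'" "0 \<le> x'" "x' \<le> y'"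
    by (cases x) (auto simp: top_unique)
  show ?thesis using x y assms by (simp add: ennpow_ennreal powr_mono2)
qed simp

lemma ennpow_ennpow: "ennpow (ennpow x a) b = ennpow x (a * b)"
  by (cases x) (auto simp: ennpow_def powr_powr)

lemma ennpow_mult:
  assumes "0 < a"
  shows "ennpow (x * y) a = ennpow x a * ennpow y a"
proof (cases "x = \<infinity> \<or> y = \<infinity>")
  case True
  then show ?thesis
    using ennpow_pos[of x a] ennpow_pos[of y a]
    by (cases "x = 0 \<or> y = 0") (auto simp: ennreal_mult_eq_top_iff ennreal_mult_top ennreal_top_mult)
next
  case False
  then obtain x' y' where "x = ennreal x'" "0 \<le> x'" "y = ennreal y'" "0 \<le> y'"
    by (cases x; cases y) auto
  then show ?thesis by (simp add: ennpow_ennreal powr_mult ennreal_mult[symmetric])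
qed

lemma measurable_ennpow [measurable]:
  assumes [measurable]: "u \<in> borel_measurable M"
  shows "(\<lambda>x. ennpow (u x) a) \<in> borel_measurable M"
  unfolding ennpow_def by measurable

lemma ennpow_add_le:
  assumes "0 < a"
  shows "ennpow (x + y) a \<le> ennreal (2 powr a) * (ennpow x a + ennpow y a)"
proof -
  have "ennpow (x + y) a \<le> ennpow (2 * max x y) a"
    by (rule ennpow_mono) (use assms in \<open>auto simp: mult_2 add_mono\<close>)
  also have "\<dots> = ennreal (2 powr a) * ennpow (max x y) a"
    using assms by (simp add: ennpow_mult ennpow_ennreal[of 2, simplified])
  also have "ennpow (max x y) a \<le> ennpow x a + ennpow y a"
    by (cases "x \<le> y") (auto simp: max_def add_increasing add_increasing2)
  finally show ?thesis by (simp add: mult_left_mono)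
qed

lemma tangent_le_powr:
  fixes u l t :: real
  assumes "0 \<le> u" "0 < l" "1 \<le> t"
  shows "t * l powr (t - 1) * u \<le> u powr t + (t - 1) * l powr t"
proof (cases "u = 0")
  case False
  then have u: "0 < u" using assms by simp
  have "(u powr t) powr (1/t) * (l powr t) powr ((t-1)/t) \<le> (1/t) * u powr t + ((t-1)/t) * l powr t"
    using assms u by (intro Youngs_inequality_0) (auto simp: field_simps)
  moreover have "(u powr t) powr (1/t) = u" "(l powr t) powr ((t-1)/t) = l powr (t - 1)"
    using u assms by (simp_all add: powr_powr)
  ultimately have "u * l powr (t-1) \<le> (1/t) * u powr t + ((t-1)/t) * l powr t"
    by simp
  then have "t * (u * l powr (t-1)) \<le> t * ((1/t) * u powr t + ((t-1)/t) * l powr t)"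
    using assms by (intro mult_left_mono) auto
  also have "\<dots> = u powr t + (t - 1) * l powr t"
    using assms by (simp add: field_simps)
  finally show ?thesis by (simp add: mult_ac)
qed (use assms in simp)

lemma ennreal_tangent_le_ennpow:
  fixes l t :: real
  assumes "0 < l" "1 \<le> t"
  shows "ennreal (t * l powr (t - 1)) * x \<le> ennpow x t + ennreal ((t - 1) * l powr t)"
proof (cases "x = \<infinity>")
  case True
  then show ?thesis using assms by (simp add: ennreal_mult_top)
next
  case False
  then obtain x' where x: "x = ennreal x'" "0 \<le> x'" by (cases x) auto
  have "ennreal (t * l powr (t - 1) * x') \<le> ennreal (x' powr t + (t - 1) * l powr t)"
    using tangent_le_powr[of x' l t] x assms by (intro ennreal_leI) auto
  then show ?thesis
    using x assms by (simp add: ennpow_ennreal ennreal_plus ennreal_mult)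
qed

section \<open>Jensen's inequality for powers\<close>

lemma ennpow_le_of_tangent_bounds:
  fixes J :: ennreal and i m t :: real
  assumes "0 < i" "0 < m" "1 \<le> t"
    and tangent: "\<And>l. 0 < l \<Longrightarrow> ennreal (t * l powr (t - 1)) * J \<le> ennreal (i + (t - 1) * l powr t * m)"
  shows "ennpow J t \<le> ennreal (m powr (t - 1) * i)"
proof -
  \<comment> \<open>the tangent bound is optimal at the point \<open>l\<close> with \<open>l\<^sup>t = i/m\<close>\<close>
  define l where "l = (i / m) powr (1 / t)"
  have l: "0 < l" and lt: "l powr t = i / m"
    using assms by (simp_all add: l_def powr_powr)
  have "0 < t * l powr (t - 1)" using l assms by simp
  then have "J \<noteq> top"
    using tangent[OF l] l assms by (auto simp: ennreal_mult_top top_unique)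
  then obtain j where j: "J = ennreal j" "0 \<le> j" by (cases J) auto
  have "t * l powr (t - 1) * j \<le> i + (t - 1) * l powr t * m"
  proof -
    have "ennreal (t * l powr (t - 1) * j) \<le> ennreal (i + (t - 1) * l powr t * m)"
      using tangent[OF l] j l assms by (simp add: ennreal_mult[symmetric] del: ennreal_plus)
    then show ?thesis using l assms by (subst (asm) ennreal_le_iff) auto
  qed
  also have "\<dots> = t * (l powr (t - 1) * (l * m))"
    using lt l assms by (simp add: powr_diff field_simps)
  finally have "j \<le> l * m" using l assms by (simp add: mult.assoc)
  then have "j powr t \<le> (l * m) powr t" using j assms by (intro powr_mono2) auto
  also have "\<dots> = m powr (t - 1) * i"
    using l assms by (simp add: powr_mult lt powr_diff field_simps)
  finally show ?thesis using j by (simp add: ennpow_ennreal ennreal_leI)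
qed

lemma nn_integral_power_mean:
  assumes [measurable]: "u \<in> borel_measurable M" "w \<in> borel_measurable M" and t: "1 \<le> t"
  shows "ennpow (\<integral>\<^sup>+x. u x * w x \<partial>M) t
           \<le> ennpow (\<integral>\<^sup>+x. w x \<partial>M) (t - 1) * (\<integral>\<^sup>+x. ennpow (u x) t * w x \<partial>M)"
    (is "ennpow ?J t \<le> ennpow ?m (t - 1) * ?I")
proof (cases "?I = 0 \<or> ?m = 0")
  case True
  then have "AE x in M. u x * w x = 0"
    using t by (auto simp: nn_integral_0_iff_AE ennpow_eq_0_iff elim!: AE_mp)
  then have "?J = 0" by (subst nn_integral_0_iff_AE) auto
  then show ?thesis by simp
next
  case False
  show ?thesis
  proof (cases "?I = top \<or> ?m = top")
    case True
    with False show ?thesis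
      using ennpow_pos[of ?m "t - 1"] by (auto simp: ennreal_mult_eq_top_iff)
  next
    case finite: False
    then obtain i m where i: "?I = ennreal i" "0 < i" and m: "?m = ennreal m" "0 < m"
      using False by (cases ?I; cases ?m) auto
    have "ennpow ?J t \<le> ennreal (m powr (t - 1) * i)"
    proof (rule ennpow_le_of_tangent_bounds[OF i(2) m(2) t])
      fix l :: real assume l: "0 < l"
      have "ennreal (t * l powr (t - 1)) * ?J = (\<integral>\<^sup>+x. ennreal (t * l powr (t - 1)) * u x * w x \<partial>M)"
        by (subst nn_integral_cmult[symmetric]) (auto simp: mult.assoc)
      also have "\<dots> \<le> (\<integral>\<^sup>+x. ennpow (u x) t * w x + ennreal ((t - 1) * l powr t) * w x \<partial>M)"
        using ennreal_tangent_le_ennpow[OF l t]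
        by (intro nn_integral_mono) (metis distrib_right mult_right_mono zero_le)
      also have "\<dots> = ?I + ennreal ((t - 1) * l powr t) * ?m"
        by (simp add: nn_integral_add nn_integral_cmult)
      finally show "ennreal (t * l powr (t - 1)) * ?J \<le> ennreal (i + (t - 1) * l powr t * m)"
        using i m l t by (simp add: ennreal_mult ennreal_plus)
    qed
    then show ?thesis
      using i m by (simp add: ennpow_ennreal ennreal_mult)
  qed
qed

section \<open>Circle integrals and Cauchy estimates\<close>

lemma measurable_polar_disc:
  fixes H :: "complex \<Rightarrow> real"
  assumes "continuous_on (ball 0 1) H"
  shows "(\<lambda>(\<theta>::real, r::real). ennreal (H (of_real r * cis \<theta>)) * indicator {0..<1} r)
           \<in> borel_measurable (lborel \<Otimes>\<^sub>M lborel)"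
proof -
  define S :: "(real \<times> real) set" where "S = UNIV \<times> {-1<..<1}"
  have "continuous_on S (\<lambda>x. H (of_real (snd x) * cis (fst x)))"
    unfolding S_def
    by (rule continuous_on_compose2[OF assms]) (auto intro!: continuous_intros simp: norm_mult)
  then have "(\<lambda>x. indicator S x *\<^sub>R H (of_real (snd x) * cis (fst x))) \<in> borel_measurable borel"
    by (intro borel_measurable_continuous_on_indicator) (auto simp: S_def intro!: borel_open open_Times)
  then have [measurable]: "(\<lambda>x. indicator S x *\<^sub>R H (of_real (snd x) * cis (fst x)))
      \<in> borel_measurable (lborel \<Otimes>\<^sub>M lborel)"
    by (simp add: lborel_prod measurable_lborel1)
  have "(\<lambda>x. ennreal (indicator S x *\<^sub>R H (of_real (snd x) * cis (fst x))) * indicator {0..<1} (snd x))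
           \<in> borel_measurable (lborel \<Otimes>\<^sub>M lborel)"
    by measurable
  also have "(\<lambda>x. ennreal (indicator S x *\<^sub>R H (of_real (snd x) * cis (fst x))) * indicator {0..<1} (snd x))
     = (\<lambda>(\<theta>::real, r::real). ennreal (H (of_real r * cis \<theta>)) * indicator {0..<1} r)"
    by (auto simp: S_def fun_eq_iff indicator_def)
  finally show ?thesis .
qed

lemma measurable_rm_inner:
  assumes "continuous_on (ball 0 1) F" "0 < p"
  shows "rm_inner p F \<in> borel_measurable lborel"
proof -
  have "continuous_on (ball 0 1) (\<lambda>z. norm (F z) powr p)"
    using assms by (intro continuous_on_powr' continuous_intros) auto
  from lborel.borel_measurable_nn_integral[OF measurable_polar_disc[OF this]]
  show ?thesis by (simp add: rm_inner_def[abs_def])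
qed

definition circle_norm_integral :: "(complex \<Rightarrow> complex) \<Rightarrow> real \<Rightarrow> ennreal" where
  "circle_norm_integral F \<rho> = (\<integral>\<^sup>+\<theta>\<in>{0..2*pi}. ennreal (norm (F (of_real \<rho> * cis \<theta>))) \<partial>lborel)"

lemma continuous_on_circle_parametrization:
  assumes "continuous_on (sphere 0 \<rho>) G" "0 \<le> \<rho>"
  shows "continuous_on UNIV (\<lambda>\<theta>::real. G (of_real \<rho> * cis \<theta>))"
  by (rule continuous_on_compose2[OF assms(1)])
     (use assms(2) in \<open>auto intro!: continuous_intros simp: norm_mult\<close>)

lemma circle_norm_integral_le_cmult:
  assumes "continuous_on (sphere 0 \<rho>) F" "0 \<le> \<rho>" "0 \<le> c"
    and "\<And>z. norm z = \<rho> \<Longrightarrow> norm (G z) \<le> c * norm (F z)"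
  shows "circle_norm_integral G \<rho> \<le> ennreal c * circle_norm_integral F \<rho>"
proof -
  have "(\<lambda>\<theta>. norm (F (of_real \<rho> * cis \<theta>))) \<in> borel_measurable borel"
    by (intro borel_measurable_continuous_onI continuous_intros
        continuous_on_circle_parametrization assms)
  then have [measurable]: "(\<lambda>\<theta>. norm (F (of_real \<rho> * cis \<theta>))) \<in> borel_measurable lborel"
    by (simp add: measurable_lborel1)
  have "circle_norm_integral G \<rho>
      \<le> (\<integral>\<^sup>+\<theta>. ennreal c * (ennreal (norm (F (of_real \<rho> * cis \<theta>))) * indicator {0..2*pi} \<theta>) \<partial>lborel)"
    unfolding circle_norm_integral_def using assms
    by (intro nn_integral_mono) (auto simp: indicator_def norm_mult ennreal_mult[symmetric] intro!: ennreal_leI)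
  also have "\<dots> = ennreal c * circle_norm_integral F \<rho>"
    unfolding circle_norm_integral_def by (rule nn_integral_cmult) measurable
  finally show ?thesis .
qed

lemma norm_contour_integral_circlepath_le:
  assumes "0 < \<rho>" and I: "(G has_contour_integral I) (circlepath 0 \<rho>)"
    and contG: "continuous_on (sphere 0 \<rho>) G"
  shows "ennreal (norm I) \<le> ennreal \<rho> * circle_norm_integral G \<rho>"
proof -
  have hI: "((\<lambda>t. G (0 + \<rho> * cis t) * \<rho> * \<i> * cis t) has_integral I) {0..2*pi}"
    using I unfolding circlepath_def by (subst (asm) has_contour_integral_part_circlepath_iff) auto
  define g where "g = (\<lambda>t. \<rho> * norm (G (of_real \<rho> * cis t)))"
  have contG': "continuous_on UNIV (\<lambda>\<theta>::real. G (of_real \<rho> * cis \<theta>))"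
    using continuous_on_circle_parametrization[OF contG] assms by simp
  have "continuous_on UNIV g"
    unfolding g_def by (intro continuous_intros contG')
  then have gint: "g integrable_on {0..2*pi}"
    by (rule integrable_continuous_interval[OF continuous_on_subset]) auto
  have "norm (integral {0..2*pi} (\<lambda>t. G (0 + \<rho> * cis t) * \<rho> * \<i> * cis t)) \<le> integral {0..2*pi} g"
    by (rule integral_norm_bound_integral[OF has_integral_integrable[OF hI] gint])
       (use assms in \<open>simp add: g_def norm_mult\<close>)
  then have "norm I \<le> integral {0..2*pi} g"
    using hI by (simp add: integral_unique)
  moreover have "(\<integral>\<^sup>+\<theta>. ennreal (g \<theta>) * indicator {0..2*pi} \<theta> \<partial>lborel) = ennreal (integral {0..2*pi} g)"
    by (rule nn_integral_has_integral_lebesgue'[OF _ integrable_integral[OF gint]])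
       (use assms in \<open>simp add: g_def\<close>)
  moreover have "(\<integral>\<^sup>+\<theta>. ennreal (g \<theta>) * indicator {0..2*pi} \<theta> \<partial>lborel)
      = ennreal \<rho> * circle_norm_integral G \<rho>"
  proof -
    have "(\<lambda>\<theta>. norm (G (of_real \<rho> * cis \<theta>))) \<in> borel_measurable borel"
      by (intro borel_measurable_continuous_onI continuous_intros contG')
    then have [measurable]: "(\<lambda>\<theta>. norm (G (of_real \<rho> * cis \<theta>))) \<in> borel_measurable lborel"
      by (simp add: measurable_lborel1)
    have "(\<integral>\<^sup>+\<theta>. ennreal (g \<theta>) * indicator {0..2*pi} \<theta> \<partial>lborel)
        = (\<integral>\<^sup>+\<theta>. ennreal \<rho> * (ennreal (norm (G (of_real \<rho> * cis \<theta>))) * indicator {0..2*pi} \<theta>) \<partial>lborel)"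
      using assms by (simp add: g_def ennreal_mult mult.assoc)
    also have "\<dots> = ennreal \<rho> * circle_norm_integral G \<rho>"
      unfolding circle_norm_integral_def by (rule nn_integral_cmult) measurable
    finally show ?thesis .
  qed
  ultimately show ?thesis by (simp add: ennreal_leI)
qed

lemma norm_le_circle_norm_integral:
  assumes holF: "F holomorphic_on ball 0 1" and \<rho>: "0 < \<rho>" "\<rho> < 1"
  shows "ennreal (2 * pi * norm (F 0)) \<le> circle_norm_integral F \<rho>"
proof -
  have sub: "cball 0 \<rho> \<subseteq> ball (0::complex) 1" using \<rho> by auto
  have contF: "continuous_on (cball 0 \<rho>) F"
    using holomorphic_on_imp_continuous_on[OF holF] sub by (rule continuous_on_subset)
  have "ball 0 \<rho> \<subseteq> ball (0::complex) 1" using \<rho> by auto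
  then have "((\<lambda>u. F u / (u - 0)) has_contour_integral (2 * of_real pi * \<i> * F 0)) (circlepath 0 \<rho>)"
    using \<rho> by (intro Cauchy_integral_circlepath[OF contF] holomorphic_on_subset[OF holF]) auto
  moreover have "continuous_on (sphere 0 \<rho>) (\<lambda>u. F u / (u - 0))"
    by (intro continuous_intros continuous_on_subset[OF contF]) (use \<rho> in auto)
  ultimately have "ennreal (norm (2 * of_real pi * \<i> * F 0))
      \<le> ennreal \<rho> * circle_norm_integral (\<lambda>u. F u / (u - 0)) \<rho>"
    by (rule norm_contour_integral_circlepath_le[OF \<rho>(1)])
  also have "circle_norm_integral (\<lambda>u. F u / (u - 0)) \<rho> \<le> ennreal (1 / \<rho>) * circle_norm_integral F \<rho>"
    by (rule circle_norm_integral_le_cmult[OF continuous_on_subset[OF contF]])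
       (use \<rho> in \<open>auto simp: norm_divide\<close>)
  also have "ennreal \<rho> * (ennreal (1 / \<rho>) * circle_norm_integral F \<rho>) = circle_norm_integral F \<rho>"
    using \<rho> by (simp add: mult.assoc[symmetric] ennreal_mult[symmetric])
  finally show ?thesis
    by (simp add: norm_mult mult_left_mono)
qed

lemma norm_deriv_le_circle_norm_integral:
  assumes holF: "F holomorphic_on ball 0 1" and \<rho>: "norm a < \<rho>" "\<rho> < 1"
  shows "ennreal (2 * pi * norm (deriv F a)) \<le> ennreal (\<rho> / (\<rho> - norm a)^2) * circle_norm_integral F \<rho>"
proof -
  have \<rho>0: "0 < \<rho>" using \<rho> norm_ge_zero[of a] by linarith
  have sub: "cball 0 \<rho> \<subseteq> ball (0::complex) 1" using \<rho> by auto
  have contF: "continuous_on (cball 0 \<rho>) F"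
    using holomorphic_on_imp_continuous_on[OF holF] sub by (rule continuous_on_subset)
  have "ball 0 \<rho> \<subseteq> ball (0::complex) 1" "a \<in> ball 0 \<rho>" using \<rho> by auto
  note Cauchy = Cauchy_derivative_integral_circlepath[OF contF holomorphic_on_subset[OF holF this(1)] this(2)]
  define I where "I = contour_integral (circlepath 0 \<rho>) (\<lambda>u. F u / (u - a)^2)"
  have "deriv F a = I / (2 * of_real pi * \<i>)"
    unfolding I_def by (rule DERIV_imp_deriv) (use Cauchy in auto)
  then have normI: "norm I = 2 * pi * norm (deriv F a)"
    by (simp add: norm_mult norm_divide)
  have nz: "u - a \<noteq> 0" if "norm u = \<rho>" for u using that \<rho> by auto
  have contG: "continuous_on (sphere 0 \<rho>) (\<lambda>u. F u / (u - a)^2)"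
    by (intro continuous_intros continuous_on_subset[OF contF]) (use nz in auto)
  have "(\<lambda>u. F u / (u - a)^2) contour_integrable_on circlepath 0 \<rho>"
    using Cauchy by auto
  then have "ennreal (norm I) \<le> ennreal \<rho> * circle_norm_integral (\<lambda>u. F u / (u - a)^2) \<rho>"
    unfolding I_def by (intro norm_contour_integral_circlepath_le[OF \<rho>0 _ contG] has_contour_integral_integral)
  also have "circle_norm_integral (\<lambda>u. F u / (u - a)^2) \<rho>
      \<le> ennreal (1 / (\<rho> - norm a)^2) * circle_norm_integral F \<rho>"
  proof (rule circle_norm_integral_le_cmult)
    show "continuous_on (sphere 0 \<rho>) F" by (rule continuous_on_subset[OF contF]) auto
    fix u :: complex assume u: "norm u = \<rho>"
    have "(\<rho> - norm a)^2 \<le> norm (u - a)^2"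
      using u \<rho> norm_triangle_ineq2[of u a] by (intro power_mono) auto
    moreover have "0 < (\<rho> - norm a)^2" using \<rho> by simp
    ultimately show "norm (F u / (u - a)^2) \<le> 1 / (\<rho> - norm a)^2 * norm (F u)"
      by (simp add: norm_divide norm_power frac_le)
  qed (use \<rho>0 in auto)
  also have "ennreal \<rho> * (ennreal (1 / (\<rho> - norm a)^2) * circle_norm_integral F \<rho>)
      = ennreal (\<rho> / (\<rho> - norm a)^2) * circle_norm_integral F \<rho>"
    using \<rho>0 by (simp add: mult.assoc[symmetric] ennreal_mult[symmetric])
  finally show ?thesis
    unfolding normI by (simp add: mult_left_mono)
qed

section \<open>Point evaluations on \<open>RM(p,q)\<close>\<close>

definition radial_norm_integral :: "(complex \<Rightarrow> complex) \<Rightarrow> ennreal" where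
  "radial_norm_integral F =
     (\<integral>\<^sup>+\<theta>\<in>{0..2*pi}. (\<integral>\<^sup>+r\<in>{0..<1}. ennreal (norm (F (of_real r * cis \<theta>))) \<partial>lborel) \<partial>lborel)"

lemma radial_norm_integral_ge_of_circle_bound:
  assumes contF: "continuous_on (ball 0 1) F" and \<rho>0: "0 \<le> \<rho>0" "\<rho>0 < 1"
    and bound: "\<And>\<rho>. \<rho>0 \<le> \<rho> \<Longrightarrow> \<rho> < 1 \<Longrightarrow> X \<le> K * circle_norm_integral F \<rho>"
  shows "ennreal (1 - \<rho>0) * X \<le> K * radial_norm_integral F"
proof -
  define h where "h r \<theta> = ennreal (norm (F (of_real r * cis \<theta>))) * indicator {0..<1} r
    * indicator {0..2*pi} \<theta>" for r \<theta>
  have "(\<lambda>x. (\<lambda>(\<theta>::real, r::real). ennreal (norm (F (of_real r * cis \<theta>))) * indicator {0..<1} r)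
      (snd x, fst x)) \<in> borel_measurable (lborel \<Otimes>\<^sub>M lborel)"
    by (rule measurable_compose[OF _ measurable_polar_disc]) (auto intro!: continuous_intros contF)
  then have hm: "case_prod h \<in> borel_measurable (lborel \<Otimes>\<^sub>M lborel)"
    unfolding h_def by (simp add: case_prod_beta') measurable
  have "ennreal (1 - \<rho>0) * X = (\<integral>\<^sup>+\<rho>. X * indicator {\<rho>0..<1} \<rho> \<partial>lborel)"
    using \<rho>0 by (simp add: nn_integral_cmult_indicator mult.commute)
  also have "\<dots> \<le> (\<integral>\<^sup>+\<rho>. K * (\<integral>\<^sup>+\<theta>. h \<rho> \<theta> \<partial>lborel) \<partial>lborel)"
  proof (rule nn_integral_mono)
    fix \<rho> :: real
    show "X * indicator {\<rho>0..<1} \<rho> \<le> K * (\<integral>\<^sup>+\<theta>. h \<rho> \<theta> \<partial>lborel)"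
      using bound[of \<rho>] \<rho>0 by (cases "\<rho>0 \<le> \<rho> \<and> \<rho> < 1") (auto simp: h_def circle_norm_integral_def)
  qed
  also have "\<dots> = K * (\<integral>\<^sup>+\<rho>. (\<integral>\<^sup>+\<theta>. h \<rho> \<theta> \<partial>lborel) \<partial>lborel)"
    by (rule nn_integral_cmult) (rule lborel.borel_measurable_nn_integral[OF hm])
  also have "(\<integral>\<^sup>+\<rho>. (\<integral>\<^sup>+\<theta>. h \<rho> \<theta> \<partial>lborel) \<partial>lborel) = (\<integral>\<^sup>+\<theta>. (\<integral>\<^sup>+\<rho>. h \<rho> \<theta> \<partial>lborel) \<partial>lborel)"
    by (rule lborel_pair.Fubini'[OF hm, symmetric])
  also have "\<dots> = radial_norm_integral F"
    unfolding radial_norm_integral_def h_def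
    by (intro nn_integral_cong) (auto simp: indicator_def)
  finally show ?thesis .
qed

definition rm_integral :: "real \<Rightarrow> real \<Rightarrow> (complex \<Rightarrow> complex) \<Rightarrow> ennreal" where
  "rm_integral p q F = (\<integral>\<^sup>+\<theta>\<in>{0..2*pi}. ennpow (rm_inner p F \<theta>) (q / p) \<partial>lborel)"

lemma rm_norm_eq: "rm_norm p q F = ennpow (ennreal (1 / (2 * pi)) * rm_integral p q F) (1 / q)"
  by (simp add: rm_norm_def rm_integral_def)

lemma rm_integral_eq:
  assumes "0 < q"
  shows "rm_integral p q F = ennreal (2 * pi) * ennpow (rm_norm p q F) q"
proof -
  have "ennreal (2 * pi) * ennpow (rm_norm p q F) q
      = (ennreal (2 * pi) * ennreal (1 / (2 * pi))) * rm_integral p q F"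
    using assms by (simp add: rm_norm_eq ennpow_ennpow mult.assoc)
  also have "ennreal (2 * pi) * ennreal (1 / (2 * pi)) = 1"
    by (simp add: ennreal_mult[symmetric])
  finally show ?thesis by simp
qed

lemma rm_norm_finite_iff: "rm_norm p q F < \<infinity> \<longleftrightarrow> rm_integral p q F < \<infinity>"
  unfolding rm_norm_eq ennpow_less_top_iff by (auto simp: ennreal_mult_less_top)

lemma radial_norm_integral_le_rm_inner:
  assumes contF: "continuous_on (ball 0 1) F" and p: "1 \<le> p"
  shows "(\<integral>\<^sup>+r\<in>{0..<1}. ennreal (norm (F (of_real r * cis \<theta>))) \<partial>lborel) \<le> ennpow (rm_inner p F \<theta>) (1/p)"
proof -
  define u where "u r = ennreal (norm (F (of_real r * cis \<theta>))) * indicator {0..<1} r" for r :: real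
  have "(\<lambda>(\<theta>::real, r::real). ennreal (norm (F (of_real r * cis \<theta>))) * indicator {0..<1} r)
         \<in> borel_measurable (lborel \<Otimes>\<^sub>M lborel)"
    by (rule measurable_polar_disc) (intro continuous_intros contF)
  from measurable_compose_Pair1[OF _ this, of \<theta>]
  have um: "u \<in> borel_measurable lborel" by (simp add: u_def[abs_def])
  have "ennpow (\<integral>\<^sup>+r\<in>{0..<1}. ennreal (norm (F (of_real r * cis \<theta>))) \<partial>lborel) p
      = ennpow (\<integral>\<^sup>+r. u r * indicator {0..<1} r \<partial>lborel) p"
    unfolding u_def by (intro arg_cong[where f="\<lambda>x. ennpow x p"] nn_integral_cong) (simp add: indicator_def)
  also have "\<dots> \<le> (\<integral>\<^sup>+r. ennpow (u r) p * indicator {0..<1} r \<partial>lborel)"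
    using nn_integral_power_mean[of u lborel "indicator {0..<1}" p] um p by simp
  also have "\<dots> = rm_inner p F \<theta>"
    unfolding rm_inner_def
    by (auto simp: u_def indicator_def ennpow_ennreal intro!: nn_integral_cong)
  finally have "ennpow (ennpow (\<integral>\<^sup>+r\<in>{0..<1}. ennreal (norm (F (of_real r * cis \<theta>))) \<partial>lborel) p) (1/p)
      \<le> ennpow (rm_inner p F \<theta>) (1/p)"
    by (rule ennpow_mono) (use p in auto)
  then show ?thesis using p by (simp add: ennpow_ennpow)
qed

lemma radial_norm_integral_le_rm_norm:
  assumes contF: "continuous_on (ball 0 1) F" and p: "1 \<le> p" and q: "1 \<le> q"
  shows "radial_norm_integral F \<le> ennreal (2 * pi) * rm_norm p q F"
proof -
  define Y where "Y \<theta> = ennpow (rm_inner p F \<theta>) (1/p)" for \<theta>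
  have [measurable]: "Y \<in> borel_measurable lborel"
    unfolding Y_def by (intro measurable_ennpow measurable_rm_inner contF) (use p in auto)
  have "radial_norm_integral F \<le> (\<integral>\<^sup>+\<theta>. Y \<theta> * indicator {0..2*pi} \<theta> \<partial>lborel)"
    unfolding radial_norm_integral_def Y_def
    by (intro nn_integral_mono mult_right_mono radial_norm_integral_le_rm_inner contF p) auto
  then have "ennpow (radial_norm_integral F) q \<le> ennpow (\<integral>\<^sup>+\<theta>. Y \<theta> * indicator {0..2*pi} \<theta> \<partial>lborel) q"
    by (rule ennpow_mono) (use q in auto)
  also have "\<dots> \<le> ennpow (\<integral>\<^sup>+\<theta>. indicator {0..2*pi} \<theta> \<partial>lborel) (q - 1)
      * (\<integral>\<^sup>+\<theta>. ennpow (Y \<theta>) q * indicator {0..2*pi} \<theta> \<partial>lborel)"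
    by (rule nn_integral_power_mean) (use q in auto)
  also have "\<dots> = ennpow (ennreal (2 * pi)) (q - 1) * rm_integral p q F"
    by (simp add: Y_def rm_integral_def ennpow_ennpow)
  also have "\<dots> = ennpow (ennreal (2 * pi) * rm_norm p q F) q"
    using q by (simp add: rm_integral_eq ennpow_mult ennpow_ennreal powr_diff mult.assoc[symmetric]
        ennreal_mult[symmetric])
  finally have "ennpow (ennpow (radial_norm_integral F) q) (1/q) \<le> ennpow (ennpow (ennreal (2 * pi) * rm_norm p q F) q) (1/q)"
    by (rule ennpow_mono) (use q in auto)
  then show ?thesis using q by (simp add: ennpow_ennpow)
qed

lemma norm_le_rm_norm:
  assumes holF: "F holomorphic_on ball 0 1" and p: "1 \<le> p" and q: "1 \<le> q"
  shows "ennreal (norm (F 0)) \<le> 2 * rm_norm p q F"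
proof -
  have contF: "continuous_on (ball 0 1) F" by (rule holomorphic_on_imp_continuous_on[OF holF])
  have "ennreal pi * ennreal (norm (F 0)) = ennreal (1 - 1/2) * ennreal (2 * pi * norm (F 0))"
    using ennreal_mult[of "1 - 1/2" "2 * pi * norm (F 0)"] ennreal_mult[of pi "norm (F 0)"] by simp
  also have "\<dots> \<le> 1 * radial_norm_integral F"
    by (rule radial_norm_integral_ge_of_circle_bound[OF contF])
       (auto intro: norm_le_circle_norm_integral[OF holF])
  also have "\<dots> \<le> ennreal (2 * pi) * rm_norm p q F"
    using radial_norm_integral_le_rm_norm[OF contF p q] by simp
  also have "\<dots> = ennreal pi * (2 * rm_norm p q F)"
    by (simp add: ennreal_mult mult_ac)
  finally have "ennreal pi * ennreal (norm (F 0)) \<le> ennreal pi * (2 * rm_norm p q F)" .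
  then show ?thesis by (simp add: ennreal_mult_le_mult_iff)
qed

lemma norm_deriv_le_rm_norm:
  assumes p: "1 \<le> p" and q: "1 \<le> q" and a: "a \<in> ball 0 1"
  obtains c where "0 < c" "\<And>F. F holomorphic_on ball 0 1 \<Longrightarrow> ennreal (c * norm (deriv F a)) \<le> rm_norm p q F"
proof
  define \<rho>0 where "\<rho>0 = (1 + norm a) / 2"
  have \<rho>0: "0 \<le> \<rho>0" "\<rho>0 < 1" "norm a < \<rho>0" using a by (auto simp: \<rho>0_def)
  define K where "K = 1 / (\<rho>0 - norm a)^2"
  have K: "0 < K" using \<rho>0 by (simp add: K_def)
  show "0 < (1 - \<rho>0) / K" using K \<rho>0 by simp
  fix F assume holF: "F holomorphic_on ball 0 1"
  have contF: "continuous_on (ball 0 1) F" by (rule holomorphic_on_imp_continuous_on[OF holF])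
  have "ennreal (1 - \<rho>0) * ennreal (2 * pi * norm (deriv F a)) \<le> ennreal K * radial_norm_integral F"
  proof (rule radial_norm_integral_ge_of_circle_bound[OF contF \<rho>0(1,2)])
    fix \<rho> assume \<rho>: "\<rho>0 \<le> \<rho>" "\<rho> < 1"
    have "\<rho> / (\<rho> - norm a)^2 \<le> 1 / (\<rho> - norm a)^2"
      using \<rho> \<rho>0 by (intro divide_right_mono) auto
    also have "\<dots> \<le> K"
      unfolding K_def using \<rho> \<rho>0 by (intro divide_left_mono power_mono mult_pos_pos) auto
    finally have "ennreal (\<rho> / (\<rho> - norm a)^2) * circle_norm_integral F \<rho>
        \<le> ennreal K * circle_norm_integral F \<rho>"
      by (intro mult_right_mono ennreal_leI) auto
    moreover have "norm a < \<rho>" using \<rho> \<rho>0 by linarith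
    ultimately show "ennreal (2 * pi * norm (deriv F a)) \<le> ennreal K * circle_norm_integral F \<rho>"
      using norm_deriv_le_circle_norm_integral[OF holF _ \<rho>(2)] order_trans by blast
  qed
  also have "\<dots> \<le> ennreal K * (ennreal (2 * pi) * rm_norm p q F)"
    by (intro mult_left_mono radial_norm_integral_le_rm_norm contF p q) auto
  finally have "ennreal (2 * pi * K) * ennreal ((1 - \<rho>0) / K * norm (deriv F a))
      \<le> ennreal (2 * pi * K) * rm_norm p q F"
    using K \<rho>0 by (simp add: ennreal_mult[symmetric] mult.assoc[symmetric]) (simp add: field_simps)
  then show "ennreal ((1 - \<rho>0) / K * norm (deriv F a)) \<le> rm_norm p q F"
    using K by (simp add: ennreal_mult_le_mult_iff)
qed

section \<open>The operator \<open>S\<^sub>g\<close> and necessity\<close>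

lemma has_field_derivative_contour_integral_linepath:
  assumes holF: "F holomorphic_on ball 0 1" and z: "z \<in> ball 0 1"
  shows "((\<lambda>x. contour_integral (linepath 0 x) F) has_field_derivative F z) (at z)"
proof (rule triangle_contour_integrals_starlike_primitive[OF _ _ open_ball z])
  show "continuous_on (ball 0 1) F" using holF by (rule holomorphic_on_imp_continuous_on)
  show "0 \<in> ball (0::complex) 1" by simp
  show "closed_segment 0 y \<subseteq> ball 0 1" if "y \<in> ball 0 1" for y :: complex
    using that by (intro closed_segment_subset) (auto simp: convex_ball)
  fix b c assume "closed_segment b c \<subseteq> ball (0::complex) 1"
  then have "b \<in> ball 0 1" "c \<in> ball 0 1" by auto
  then have "path_image (linepath 0 b) \<subseteq> ball 0 1" "path_image (linepath b c) \<subseteq> ball 0 1"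
      "path_image (linepath c 0) \<subseteq> ball 0 1"
    by (simp_all add: closed_segment_subset convex_ball)
  then have "(F has_contour_integral 0) (linepath 0 b +++ linepath b c +++ linepath c 0)"
    by (intro Cauchy_theorem_convex_simple[OF holF convex_ball])
       (auto simp: path_image_join intro!: valid_path_join)
  then show "contour_integral (linepath 0 b) F + contour_integral (linepath b c) F
      + contour_integral (linepath c 0) F = 0"
    by (rule has_chain_integral_chain_integral3)
qed

lemma has_field_derivative_S_op:
  assumes "f holomorphic_on ball 0 1" "g holomorphic_on ball 0 1" "z \<in> ball 0 1"
  shows "(S_op g f has_field_derivative deriv f z * g z) (at z)"
proof -
  have "(\<lambda>\<zeta>. deriv f \<zeta> * g \<zeta>) holomorphic_on ball 0 1"
    using assms by (intro holomorphic_intros holomorphic_deriv) auto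
  from has_field_derivative_contour_integral_linepath[OF this assms(3)]
  show ?thesis unfolding S_op_def[abs_def] by simp
qed

lemma holomorphic_on_S_op:
  assumes "f holomorphic_on ball 0 1" "g holomorphic_on ball 0 1"
  shows "S_op g f holomorphic_on ball 0 1"
  unfolding holomorphic_on_def field_differentiable_def
  using has_field_derivative_S_op[OF assms] has_field_derivative_at_within by blast

lemma deriv_S_op:
  assumes "f holomorphic_on ball 0 1" "g holomorphic_on ball 0 1" "z \<in> ball 0 1"
  shows "deriv (S_op g f) z = deriv f z * g z"
  using has_field_derivative_S_op[OF assms] by (rule DERIV_imp_deriv)

lemma identity_in_RM:
  assumes p: "1 \<le> p" and q: "1 \<le> q"
  shows "(\<lambda>z. z) \<in> RM p q"
proof -
  have "rm_inner p (\<lambda>z. z) \<theta> \<le> (\<integral>\<^sup>+r::real\<in>{0..<1}. 1 \<partial>lborel)" for \<theta>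
    unfolding rm_inner_def using p
    by (intro nn_integral_mono) (auto simp: indicator_def norm_mult intro!: powr_le1)
  then have "ennpow (rm_inner p (\<lambda>z. z) \<theta>) (q / p) \<le> 1" for \<theta>
    using ennpow_mono[of "rm_inner p (\<lambda>z. z) \<theta>" 1 "q / p"] p q by simp
  then have "rm_integral p q (\<lambda>z. z) \<le> (\<integral>\<^sup>+\<theta>::real\<in>{0..2*pi}. 1 \<partial>lborel)"
    unfolding rm_integral_def by (intro nn_integral_mono mult_right_mono) auto
  also have "\<dots> < \<infinity>" by simp
  finally show ?thesis
    unfolding RM_def using rm_norm_finite_iff by auto
qed

lemma le_of_power_bound:
  fixes x C R c :: real
  assumes "0 < c" "0 \<le> x" "0 \<le> C" "0 \<le> R" and bound: "\<And>k. c * x ^ k \<le> C ^ k * R"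
  shows "x \<le> C"
proof (rule ccontr)
  assume "\<not> x \<le> C"
  moreover have "0 < C"
  proof (rule ccontr)
    assume "\<not> 0 < C"
    with assms have "c * x \<le> 0" using bound[of 1] by simp
    with \<open>\<not> x \<le> C\<close> \<open>\<not> 0 < C\<close> assms show False
      by (simp add: mult_le_0_iff)
  qed
  ultimately have "1 < x / C" by simp
  then obtain n where n: "R / c < (x / C) ^ n" using real_arch_pow by blast
  have "(x / C) ^ n * (c * C ^ n) = c * x ^ n" using \<open>0 < C\<close> by (simp add: power_divide)
  also have "\<dots> \<le> C ^ n * R" by (rule bound)
  finally have "(x / C) ^ n \<le> R / c" using \<open>0 < C\<close> assms by (simp add: field_simps)
  with n show False by simp
qed

lemma bounded_if_bounded_on_RM_S_op:
  assumes p: "1 \<le> p" and q: "1 \<le> q" and holg: "g holomorphic_on ball 0 1"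
    and bounded: "bounded_on_RM p q (S_op g)"
  shows "bounded (g ` ball 0 1)"
proof -
  from bounded obtain C where C: "0 \<le> C" and closed: "\<And>f. f \<in> RM p q \<Longrightarrow> S_op g f \<in> RM p q"
    and norm_le: "\<And>f. f \<in> RM p q \<Longrightarrow> rm_norm p q (S_op g f) \<le> ennreal C * rm_norm p q f"
    unfolding bounded_on_RM_def by blast
  define \<Phi> where "\<Phi> k = (S_op g ^^ k) (\<lambda>z. z)" for k
  have \<Phi>RM: "\<Phi> k \<in> RM p q" for k
    by (induction k) (auto simp: \<Phi>_def identity_in_RM[OF p q] closed)
  then have hol\<Phi>: "\<Phi> k holomorphic_on ball 0 1" for k by (simp add: RM_def)
  obtain R where R: "rm_norm p q (\<lambda>z. z) = ennreal R" "0 \<le> R"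
    using identity_in_RM[OF p q] by (cases "rm_norm p q (\<lambda>z. z)") (auto simp: RM_def)
  have norm\<Phi>: "rm_norm p q (\<Phi> k) \<le> ennreal (C ^ k * R)" for k
  proof (induction k)
    case (Suc k)
    have "rm_norm p q (\<Phi> (Suc k)) \<le> ennreal C * rm_norm p q (\<Phi> k)"
      using norm_le[OF \<Phi>RM[of k]] by (simp add: \<Phi>_def)
    also have "\<dots> \<le> ennreal C * ennreal (C ^ k * R)" by (rule mult_left_mono[OF Suc]) simp
    finally show ?case using C R by (simp add: ennreal_mult[symmetric] mult.assoc)
  qed (simp add: \<Phi>_def R)
  have deriv\<Phi>: "deriv (\<Phi> k) a = g a ^ k" if a: "a \<in> ball 0 1" for a k
  proof (induction k)
    case (Suc k)
    have "deriv (\<Phi> (Suc k)) a = deriv (\<Phi> k) a * g a"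
      using deriv_S_op[OF hol\<Phi> holg a] by (simp add: \<Phi>_def)
    then show ?case using Suc by simp
  qed (simp add: \<Phi>_def)
  have "norm (g a) \<le> C" if a: "a \<in> ball 0 1" for a
  proof -
    obtain c where c: "0 < c"
      and le: "\<And>F. F holomorphic_on ball 0 1 \<Longrightarrow> ennreal (c * norm (deriv F a)) \<le> rm_norm p q F"
      using norm_deriv_le_rm_norm[OF p q a] by blast
    show ?thesis
    proof (rule le_of_power_bound[OF c norm_ge_zero C R(2)])
      fix k
      have "ennreal (c * norm (g a) ^ k) = ennreal (c * norm (deriv (\<Phi> k) a))"
        by (simp add: deriv\<Phi>[OF a] norm_power)
      also have "\<dots> \<le> rm_norm p q (\<Phi> k)" by (rule le[OF hol\<Phi>])
      also have "\<dots> \<le> ennreal (C ^ k * R)" by (rule norm\<Phi>)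
      finally show "c * norm (g a) ^ k \<le> C ^ k * R"
        using C R by (subst (asm) ennreal_le_iff) auto
    qed
  qed
  then show ?thesis unfolding bounded_iff by blast
qed

section \<open>Hardy's inequality\<close>

lemma nn_integral_one_minus_powr_Icc:
  fixes \<gamma> a b :: real
  assumes "a \<le> b" "b < 1" "\<gamma> \<noteq> -1"
  shows "(\<integral>\<^sup>+r. ennreal ((1 - r) powr \<gamma>) * indicator {a..b} r \<partial>lborel)
           = ennreal (((1 - a) powr (\<gamma> + 1) - (1 - b) powr (\<gamma> + 1)) / (\<gamma> + 1))"
proof -
  define F where "F = (\<lambda>r::real. -((1 - r) powr (\<gamma> + 1) / (\<gamma> + 1)))"
  have D: "DERIV F x :> (1 - x) powr \<gamma>" if "x \<in> {a..b}" for x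
  proof -
    have x: "0 < 1 - x" using that assms by auto
    have der: "DERIV (\<lambda>x. (1 - x) powr (\<gamma> + 1)) x :> (\<gamma> + 1) * (1 - x) powr (\<gamma> + 1 - of_nat 1) * (-1)"
      by (rule DERIV_fun_powr) (use x in \<open>auto intro!: derivative_eq_intros\<close>)
    have d2: "DERIV F x :> - ((\<gamma> + 1) * (1 - x) powr (\<gamma> + 1 - of_nat 1) * (-1) / (\<gamma> + 1))"
      unfolding F_def by (rule DERIV_minus[OF DERIV_cdivide[OF der]])
    have g1: "\<gamma> + 1 \<noteq> 0" using assms(3) by linarith
    have e: "- ((\<gamma> + 1) * (1 - x) powr (\<gamma> + 1 - of_nat 1) * (-1) / (\<gamma> + 1)) = (1 - x) powr \<gamma>"
      using g1 by simp
    show ?thesis using d2 unfolding e .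
  qed
  have "(\<integral>\<^sup>+r. ennreal ((1 - r) powr \<gamma>) * indicator {a..b} r \<partial>lborel) = ennreal (F b - F a)"
    by (rule nn_integral_FTC_Icc[OF _ D]) (use assms in auto)
  also have "F b - F a = ((1 - a) powr (\<gamma> + 1) - (1 - b) powr (\<gamma> + 1)) / (\<gamma> + 1)"
    by (simp add: F_def diff_divide_distrib)
  finally show ?thesis .
qed

lemma nn_integral_one_minus_powr_atLeastLessThan_le:
  fixes \<alpha> s :: real
  assumes "0 \<le> \<alpha>" "\<alpha> < 1" "s < 1"
  shows "(\<integral>\<^sup>+r. ennreal ((1 - r) powr (-\<alpha>)) * indicator {s..<1} r \<partial>lborel)
           \<le> ennreal ((1 - s) powr (1 - \<alpha>) / (1 - \<alpha>))"
proof -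
  define b where "b n = 1 - (1 - s) / real (Suc n)" for n
  define f where "f n r = ennreal ((1 - r) powr (-\<alpha>)) * indicator {s..b n} r" for n r
  have b: "s \<le> b n" "b n < 1" for n
  proof -
    have "(1 - s) / real (Suc n) \<le> (1 - s) / 1"
      using assms by (intro divide_left_mono) auto
    then show "s \<le> b n" by (simp add: b_def)
    show "b n < 1" using assms by (simp add: b_def)
  qed
  have bmono: "b n \<le> b m" if "n \<le> m" for n m
    using assms that by (auto simp: b_def intro!: divide_left_mono)
  have inc: "incseq f"
  proof (unfold incseq_def le_fun_def, intro allI impI)
    fix n m :: nat and r :: real assume nm: "n \<le> m"
    have "indicator {s..b n} r \<le> (indicator {s..b m} r :: ennreal)"
      using bmono[OF nm] by (cases "r \<in> {s..b n}") auto
    then show "f n r \<le> f m r" unfolding f_def by (rule mult_left_mono) simp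
  qed
  have meas: "f n \<in> borel_measurable lborel" for n
    unfolding f_def by measurable
  have le: "ennreal ((1 - r) powr (-\<alpha>)) * indicator {s..<1} r \<le> (SUP n. f n r)" for r
  proof (cases "r \<in> {s..<1}")
    case True
    then have "0 < 1 - r" by auto
    obtain n where "(1 - s) / (1 - r) < real n"
      using reals_Archimedean2 by blast
    then have n: "(1 - s) / (1 - r) < real (Suc n)" by simp
    then have "(1 - s) / real (Suc n) < 1 - r"
      using \<open>0 < 1 - r\<close> by (simp add: field_simps)
    then have "r \<le> b n" by (simp add: b_def)
    then have "ennreal ((1 - r) powr (-\<alpha>)) * indicator {s..<1} r = f n r"
      using True by (simp add: f_def)
    also have "\<dots> \<le> (SUP n. f n r)" by (rule SUP_upper) simp
    finally show ?thesis .
  qed simp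
  have "(\<integral>\<^sup>+r. ennreal ((1 - r) powr (-\<alpha>)) * indicator {s..<1} r \<partial>lborel) \<le> (\<integral>\<^sup>+r. (SUP n. f n r) \<partial>lborel)"
    by (intro nn_integral_mono le)
  also have "\<dots> = (SUP n. integral\<^sup>N lborel (f n))"
    by (rule nn_integral_monotone_convergence_SUP[OF inc meas])
  also have "\<dots> \<le> ennreal ((1 - s) powr (1 - \<alpha>) / (1 - \<alpha>))"
  proof (rule SUP_least)
    fix n
    have "integral\<^sup>N lborel (f n) = ennreal (((1 - s) powr (-\<alpha> + 1) - (1 - b n) powr (-\<alpha> + 1)) / (-\<alpha> + 1))"
      unfolding f_def by (rule nn_integral_one_minus_powr_Icc[OF b(1) b(2)]) (use assms in auto)
    also have "\<dots> \<le> ennreal ((1 - s) powr (1 - \<alpha>) / (1 - \<alpha>))"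
      using assms by (intro ennreal_leI) (simp, intro divide_right_mono, auto)
    finally show "integral\<^sup>N lborel (f n) \<le> ennreal ((1 - s) powr (1 - \<alpha>) / (1 - \<alpha>))" .
  qed
  finally show ?thesis .
qed

lemma Hardy_pointwise:
  fixes \<phi> :: "real \<Rightarrow> real" and p r :: real
  assumes \<phi>m: "\<phi> \<in> borel_measurable borel" and \<phi>0: "\<And>s. 0 \<le> \<phi> s" and p: "1 \<le> p"
    and r: "0 \<le> r" "r < 1"
  shows "ennpow (\<integral>\<^sup>+s. ennreal (\<phi> s / (1 - s)) * indicator {0..r} s \<partial>lborel) p
      \<le> ennreal (p powr (p - 1) * (1 - r) powr (-((p - 1) / p)))
         * (\<integral>\<^sup>+s. ennreal (\<phi> s powr p * (1 - s) powr (-1/p)) * indicator {0..r} s \<partial>lborel)"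
proof -
  define x where "x s = ennreal (\<phi> s * (1 - s) powr (1/p))" for s
  define w where "w s = ennreal ((1 - s) powr (-1 - 1/p)) * indicator {0..r} s" for s
  have xm: "x \<in> borel_measurable lborel" unfolding x_def using \<phi>m by (simp add: measurable_lborel1) measurable
  have wm: "w \<in> borel_measurable lborel" unfolding w_def by measurable
  have PM: "ennpow (\<integral>\<^sup>+s. x s * w s \<partial>lborel) p \<le> ennpow (\<integral>\<^sup>+s. w s \<partial>lborel) (p - 1) * (\<integral>\<^sup>+s. ennpow (x s) p * w s \<partial>lborel)"
    by (rule nn_integral_power_mean[OF xm wm p])
  have e1: "(\<integral>\<^sup>+s. x s * w s \<partial>lborel) = (\<integral>\<^sup>+s. ennreal (\<phi> s / (1 - s)) * indicator {0..r} s \<partial>lborel)"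
  proof (intro nn_integral_cong)
    fix s :: real
    have "\<phi> s * (1 - s) powr (1/p) * (1 - s) powr (-1 - 1/p) = \<phi> s / (1 - s)" if "s \<le> r"
      using that r by (simp add: mult.assoc powr_add[symmetric] powr_minus_divide)
    then show "x s * w s = ennreal (\<phi> s / (1 - s)) * indicator {0..r} s"
      using \<phi>0[of s] by (auto simp: x_def w_def indicator_def ennreal_mult[symmetric])
  qed
  have e2: "(\<integral>\<^sup>+s. ennpow (x s) p * w s \<partial>lborel)
      = (\<integral>\<^sup>+s. ennreal (\<phi> s powr p * (1 - s) powr (-1/p)) * indicator {0..r} s \<partial>lborel)"
  proof (intro nn_integral_cong)
    fix s :: real
    have "(\<phi> s * (1 - s) powr (1/p)) powr p * (1 - s) powr (-1 - 1/p) = \<phi> s powr p * (1 - s) powr (-1/p)"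
      if "s \<le> r"
      using that r p \<phi>0[of s]
      by (simp add: powr_mult powr_powr mult.assoc powr_add[symmetric] powr_mult_base)
    then show "ennpow (x s) p * w s = ennreal (\<phi> s powr p * (1 - s) powr (-1/p)) * indicator {0..r} s"
      using \<phi>0[of s] by (auto simp: x_def w_def indicator_def ennpow_ennreal ennreal_mult[symmetric])
  qed
  have e3: "(\<integral>\<^sup>+s. w s \<partial>lborel) = ennreal (((1 - 0) powr (-1 - 1/p + 1) - (1 - r) powr (-1 - 1/p + 1)) / (-1 - 1/p + 1))"
    unfolding w_def by (rule nn_integral_one_minus_powr_Icc) (use r p in auto)
  have "((1 - 0) powr (-1 - 1/p + 1) - (1 - r) powr (-1 - 1/p + 1)) / (-1 - 1/p + 1) = p * ((1 - r) powr (-1/p) - 1)"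
    using p by (simp add: field_simps)
  also have "\<dots> \<le> p * (1 - r) powr (-1/p)" using p by simp
  finally have W: "(\<integral>\<^sup>+s. w s \<partial>lborel) \<le> ennreal (p * (1 - r) powr (-1/p))"
    unfolding e3 by (rule ennreal_leI)
  have "ennpow (\<integral>\<^sup>+s. w s \<partial>lborel) (p - 1) \<le> ennpow (ennreal (p * (1 - r) powr (-1/p))) (p - 1)"
    by (rule ennpow_mono[OF W]) (use p in auto)
  also have "\<dots> = ennreal (p powr (p - 1) * (1 - r) powr (-((p - 1) / p)))"
  proof -
    have "(p * (1 - r) powr (-1/p)) powr (p - 1) = p powr (p - 1) * (1 - r) powr (-((p - 1) / p))"
      using p r by (simp add: powr_mult powr_powr)
    then show ?thesis using p r by (simp add: ennpow_ennreal)
  qed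
  finally have W2: "ennpow (\<integral>\<^sup>+s. w s \<partial>lborel) (p - 1) \<le> ennreal (p powr (p - 1) * (1 - r) powr (-((p - 1) / p)))" .
  show ?thesis
    using PM unfolding e1 e2
    by (rule order_trans) (rule mult_right_mono[OF W2], simp)
qed

lemma sets_triangle_lborel: "{x :: real \<times> real. snd x \<le> fst x} \<in> sets (lborel \<Otimes>\<^sub>M lborel)"
proof -
  have "closed {x :: real \<times> real. snd x \<le> fst x}"
    by (intro closed_Collect_le continuous_intros)
  then have "{x :: real \<times> real. snd x \<le> fst x} \<in> sets lborel" by simp
  then show ?thesis by (simp only: lborel_prod)
qed

lemma measurable_nn_integral_Icc_upper:
  fixes B :: "real \<Rightarrow> ennreal"
  assumes [measurable]: "B \<in> borel_measurable lborel"
  shows "(\<lambda>r. \<integral>\<^sup>+s. B s * indicator {0..r} s \<partial>lborel) \<in> borel_measurable lborel"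
proof -
  have "(\<lambda>x::real \<times> real. B (snd x) * indicator {0..} (snd x) * indicator {x. snd x \<le> fst x} x)
      \<in> borel_measurable (lborel \<Otimes>\<^sub>M lborel)"
    using sets_triangle_lborel by measurable
  then have "(\<lambda>r. \<integral>\<^sup>+s. (\<lambda>(r, s). B s * indicator {0..} s * indicator {x. snd x \<le> fst x} (r, s)) (r, s)
      \<partial>lborel) \<in> borel_measurable lborel"
    by (intro lborel.borel_measurable_nn_integral) (simp add: case_prod_beta')
  also have "(\<lambda>r. \<integral>\<^sup>+s. (\<lambda>(r, s). B s * indicator {0..} s * indicator {x. snd x \<le> fst x} (r, s)) (r, s)
      \<partial>lborel) = (\<lambda>r. \<integral>\<^sup>+s. B s * indicator {0..r} s \<partial>lborel)"
    by (intro ext nn_integral_cong) (auto simp: indicator_def)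
  finally show ?thesis .
qed

lemma nn_integral_swap_Icc:
  fixes E B :: "real \<Rightarrow> ennreal"
  assumes [measurable]: "E \<in> borel_measurable lborel" "B \<in> borel_measurable lborel"
  shows "(\<integral>\<^sup>+r. E r * (\<integral>\<^sup>+s. B s * indicator {0..r} s \<partial>lborel) \<partial>lborel)
       = (\<integral>\<^sup>+s. B s * indicator {0..} s * (\<integral>\<^sup>+r. E r * indicator {s..} r \<partial>lborel) \<partial>lborel)"
proof -
  define G where "G r s = E r * (B s * indicator {0..} s) * indicator {x. snd x \<le> fst x} (r, s)"
    for r s :: real
  have "(\<lambda>x. E (fst x) * (B (snd x) * indicator {0..} (snd x)) * indicator {x. snd x \<le> fst x} x)
      \<in> borel_measurable (lborel \<Otimes>\<^sub>M lborel)"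
    using sets_triangle_lborel by measurable
  then have Gm: "case_prod G \<in> borel_measurable (lborel \<Otimes>\<^sub>M lborel)"
    by (simp add: G_def case_prod_beta')
  have "(\<integral>\<^sup>+r. E r * (\<integral>\<^sup>+s. B s * indicator {0..r} s \<partial>lborel) \<partial>lborel)
      = (\<integral>\<^sup>+r. (\<integral>\<^sup>+s. G r s \<partial>lborel) \<partial>lborel)"
    by (auto simp: G_def nn_integral_cmult[symmetric] mult_ac indicator_def intro!: nn_integral_cong)
  also have "\<dots> = (\<integral>\<^sup>+s. (\<integral>\<^sup>+r. G r s \<partial>lborel) \<partial>lborel)"
    by (rule lborel_pair.Fubini'[OF Gm, symmetric])
  also have "\<dots> = (\<integral>\<^sup>+s. B s * indicator {0..} s * (\<integral>\<^sup>+r. E r * indicator {s..} r \<partial>lborel) \<partial>lborel)"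
    by (auto simp: G_def nn_integral_cmult[symmetric] mult_ac indicator_def intro!: nn_integral_cong)
  finally show ?thesis .
qed

lemma Hardy_inequality:
  fixes \<phi> :: "real \<Rightarrow> real" and p :: real
  assumes \<phi>m: "\<phi> \<in> borel_measurable borel" and \<phi>0: "\<And>s. 0 \<le> \<phi> s" and p: "1 \<le> p"
  shows "(\<integral>\<^sup>+r. ennpow (\<integral>\<^sup>+s. ennreal (\<phi> s / (1 - s)) * indicator {0..r} s \<partial>lborel) p * indicator {0..<1} r \<partial>lborel)
         \<le> ennreal (p powr p) * (\<integral>\<^sup>+s. ennreal (\<phi> s powr p) * indicator {0..<1} s \<partial>lborel)"
proof -
  define \<alpha> where "\<alpha> = (p - 1) / p"
  have \<alpha>: "0 \<le> \<alpha>" "\<alpha> < 1" "1 - \<alpha> = 1 / p" using p by (auto simp: \<alpha>_def field_simps)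
  define E where "E r = ennreal ((1 - r) powr (-\<alpha>)) * indicator {0..<1} r" for r :: real
  define B where "B s = ennreal (\<phi> s powr p * (1 - s) powr (-1/p))" for s :: real
  have [measurable]: "\<phi> \<in> borel_measurable lborel" using \<phi>m by (simp add: measurable_lborel1)
  have [measurable]: "E \<in> borel_measurable lborel" "B \<in> borel_measurable lborel"
    unfolding E_def B_def by measurable
  have "(\<integral>\<^sup>+r. ennpow (\<integral>\<^sup>+s. ennreal (\<phi> s / (1 - s)) * indicator {0..r} s \<partial>lborel) p * indicator {0..<1} r \<partial>lborel)
      \<le> (\<integral>\<^sup>+r. ennreal (p powr (p - 1)) * (E r * (\<integral>\<^sup>+s. B s * indicator {0..r} s \<partial>lborel)) \<partial>lborel)"
  proof (rule nn_integral_mono)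
    fix r :: real
    show "ennpow (\<integral>\<^sup>+s. ennreal (\<phi> s / (1 - s)) * indicator {0..r} s \<partial>lborel) p * indicator {0..<1} r
        \<le> ennreal (p powr (p - 1)) * (E r * (\<integral>\<^sup>+s. B s * indicator {0..r} s \<partial>lborel))"
      using Hardy_pointwise[OF \<phi>m \<phi>0 p, of r] p
      by (cases "r \<in> {0..<1}") (simp_all add: E_def B_def \<alpha>_def ennreal_mult mult_ac)
  qed
  also have "\<dots> = ennreal (p powr (p - 1)) * (\<integral>\<^sup>+r. E r * (\<integral>\<^sup>+s. B s * indicator {0..r} s \<partial>lborel) \<partial>lborel)"
    by (rule nn_integral_cmult) (use measurable_nn_integral_Icc_upper in measurable)
  also have "(\<integral>\<^sup>+r. E r * (\<integral>\<^sup>+s. B s * indicator {0..r} s \<partial>lborel) \<partial>lborel)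
      = (\<integral>\<^sup>+s. B s * indicator {0..} s * (\<integral>\<^sup>+r. E r * indicator {s..} r \<partial>lborel) \<partial>lborel)"
    by (rule nn_integral_swap_Icc) measurable
  also have "\<dots> \<le> (\<integral>\<^sup>+s. ennreal p * (ennreal (\<phi> s powr p) * indicator {0..<1} s) \<partial>lborel)"
  proof (rule nn_integral_mono)
    fix s :: real
    show "B s * indicator {0..} s * (\<integral>\<^sup>+r. E r * indicator {s..} r \<partial>lborel)
        \<le> ennreal p * (ennreal (\<phi> s powr p) * indicator {0..<1} s)"
    proof (cases "s \<in> {0..<1}")
      case True
      then have s: "0 \<le> s" "s < 1" by auto
      have "(\<integral>\<^sup>+r. E r * indicator {s..} r \<partial>lborel)
          = (\<integral>\<^sup>+r. ennreal ((1 - r) powr (-\<alpha>)) * indicator {s..<1} r \<partial>lborel)"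
        using s by (intro nn_integral_cong) (auto simp: E_def indicator_def)
      also have "\<dots> \<le> ennreal ((1 - s) powr (1 - \<alpha>) / (1 - \<alpha>))"
        by (rule nn_integral_one_minus_powr_atLeastLessThan_le[OF \<alpha>(1,2) s(2)])
      finally have "B s * indicator {0..} s * (\<integral>\<^sup>+r. E r * indicator {s..} r \<partial>lborel)
          \<le> B s * ennreal ((1 - s) powr (1/p) * p)"
        using s \<alpha>(3) p by (simp add: mult_left_mono)
      also have "\<dots> = ennreal (\<phi> s powr p * ((1 - s) powr (-1/p) * (1 - s) powr (1/p)) * p)"
        using p by (simp add: B_def ennreal_mult[symmetric] mult_ac)
      also have "\<dots> = ennreal p * (ennreal (\<phi> s powr p) * indicator {0..<1} s)"
        using s p by (simp add: powr_add[symmetric] ennreal_mult[symmetric] mult.commute)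
      finally show ?thesis .
    next
      case False
      have "B s * indicator {0..} s * (\<integral>\<^sup>+r. E r * indicator {s..} r \<partial>lborel) = 0"
      proof (cases "s < 0")
        case False
        with \<open>s \<notin> {0..<1}\<close> have "(\<lambda>r. E r * indicator {s..} r) = (\<lambda>_. 0)"
          by (auto simp: E_def indicator_def)
        then show ?thesis by simp
      qed simp
      then show ?thesis by (metis zero_le)
    qed
  qed
  also have "\<dots> = ennreal p * (\<integral>\<^sup>+s. ennreal (\<phi> s powr p) * indicator {0..<1} s \<partial>lborel)"
    by (rule nn_integral_cmult) measurable
  finally show ?thesis
    using p by (simp add: mult.assoc[symmetric] ennreal_mult[symmetric] powr_diff mult_left_mono)
qed

section \<open>Sufficiency\<close>

lemma norm_deriv_le_of_bounded:
  assumes holg: "g holomorphic_on ball 0 1" and gb: "\<And>z. z \<in> ball 0 1 \<Longrightarrow> norm (g z) \<le> M"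
    and z: "z \<in> ball 0 1"
  shows "norm (deriv g z) \<le> 2 * M / (1 - norm z)"
proof -
  define r where "r = (1 - norm z) / 2"
  have r: "0 < r" using z by (simp add: r_def)
  have sub: "cball z r \<subseteq> ball 0 1"
  proof
    fix w assume "w \<in> cball z r"
    then have "norm w \<le> norm z + r"
      using norm_triangle_ineq2[of w z] by (simp add: dist_norm norm_minus_commute)
    also have "\<dots> < 1" using z by (simp add: r_def field_simps)
    finally show "w \<in> ball 0 1" by simp
  qed
  have "norm ((deriv ^^ 1) g z) \<le> fact 1 * M / r ^ 1"
  proof (rule Cauchy_inequality)
    show "g holomorphic_on ball z r" using holg by (rule holomorphic_on_subset) (use sub in auto)
    show "continuous_on (cball z r) g"
      using holomorphic_on_imp_continuous_on[OF holg] sub by (rule continuous_on_subset)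
    show "norm (g x) \<le> M" if "norm (z - x) = r" for x
      using that sub by (intro gb) (auto simp: dist_norm)
  qed (rule r)
  then show ?thesis by (simp add: r_def mult.commute)
qed

lemma has_field_derivative_S_op_minus_mult:
  assumes holf: "f holomorphic_on ball 0 1" and holg: "g holomorphic_on ball 0 1"
    and z: "z \<in> ball 0 1"
  shows "((\<lambda>z. S_op g f z - f z * g z) has_field_derivative - (f z * deriv g z)) (at z)"
proof -
  have "((\<lambda>z. S_op g f z - f z * g z) has_field_derivative
      deriv f z * g z - (deriv f z * g z + deriv g z * f z)) (at z)"
    by (intro DERIV_diff has_field_derivative_S_op[OF holf holg z] DERIV_mult
        holomorphic_derivI[OF holf open_ball z] holomorphic_derivI[OF holg open_ball z])
  then show ?thesis by (simp add: algebra_simps)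
qed

lemma norm_S_op_radial_le:
  assumes holf: "f holomorphic_on ball 0 1" and holg: "g holomorphic_on ball 0 1"
    and gb: "\<And>z. z \<in> ball 0 1 \<Longrightarrow> norm (g z) \<le> M" and r: "0 \<le> r" "r < 1"
  shows "ennreal (norm (S_op g f (of_real r * cis \<theta>)))
           \<le> ennreal (M * norm (f (of_real r * cis \<theta>))) + ennreal (M * norm (f 0))
             + (\<integral>\<^sup>+s. ennreal (2 * M * norm (f (of_real s * cis \<theta>)) / (1 - s)) * indicator {0..r} s \<partial>lborel)"
proof -
  define \<gamma> where "\<gamma> s = of_real s * cis \<theta>" for s :: real
  define H where "H z = S_op g f z - f z * g z" for z
  define u where "u s = 2 * M * norm (f (\<gamma> s)) / (1 - s)" for s
  have \<gamma>: "\<gamma> s \<in> ball 0 1" "norm (\<gamma> s) = s" if "s \<in> {0..r}" for s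
    using that r by (auto simp: \<gamma>_def norm_mult)
  have vd: "((H \<circ> \<gamma>) has_vector_derivative (cis \<theta> * - (f (\<gamma> s) * deriv g (\<gamma> s)))) (at s within {0..r})"
    if s: "s \<in> {0..r}" for s
  proof -
    have "(\<gamma> has_vector_derivative cis \<theta>) (at s)"
      unfolding \<gamma>_def
      by (auto intro!: derivative_eq_intros simp: has_vector_derivative_def scaleR_conv_of_real)
    from field_vector_diff_chain_at[OF this has_field_derivative_S_op_minus_mult[OF holf holg \<gamma>(1)[OF s]]]
    show ?thesis unfolding H_def[abs_def] by (rule has_vector_derivative_at_within)
  qed
  have "((\<lambda>s. cis \<theta> * - (f (\<gamma> s) * deriv g (\<gamma> s))) has_integral (H \<circ> \<gamma>) r - (H \<circ> \<gamma>) 0) {0..r}"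
    by (rule fundamental_theorem_of_calculus[OF r(1) vd])
  then have I: "((\<lambda>s. cis \<theta> * - (f (\<gamma> s) * deriv g (\<gamma> s))) has_integral H (\<gamma> r) - H (\<gamma> 0)) {0..r}"
    by simp
  have "continuous_on {0..r} (\<lambda>s. f (\<gamma> s))"
    by (rule continuous_on_compose2[OF holomorphic_on_imp_continuous_on[OF holf]])
       (use \<gamma> in \<open>auto intro!: continuous_intros simp: \<gamma>_def\<close>)
  then have "continuous_on {0..r} u"
    unfolding u_def using r by (intro continuous_intros) auto
  then have uint: "u integrable_on {0..r}" by (rule integrable_continuous_interval)
  have M: "0 \<le> M" using gb[of 0] norm_ge_zero[of "g 0"] by (simp del: norm_ge_zero)
  have fg: "norm (f z * g z) \<le> M * norm (f z)" if "z \<in> ball 0 1" for z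
    using mult_left_mono[OF gb[OF that], of "norm (f z)"] by (simp add: norm_mult mult.commute)
  have "norm (H (\<gamma> r) - H (\<gamma> 0)) \<le> integral {0..r} u"
  proof -
    have "norm (integral {0..r} (\<lambda>s. cis \<theta> * - (f (\<gamma> s) * deriv g (\<gamma> s)))) \<le> integral {0..r} u"
    proof (rule integral_norm_bound_integral[OF has_integral_integrable[OF I] uint])
      fix s assume s: "s \<in> {0..r}"
      have "norm (deriv g (\<gamma> s)) \<le> 2 * M / (1 - s)"
        using norm_deriv_le_of_bounded[OF holg gb \<gamma>(1)[OF s]] \<gamma>(2)[OF s] by simp
      then have "norm (f (\<gamma> s)) * norm (deriv g (\<gamma> s)) \<le> norm (f (\<gamma> s)) * (2 * M / (1 - s))"
        by (rule mult_left_mono) simp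
      then show "norm (cis \<theta> * - (f (\<gamma> s) * deriv g (\<gamma> s))) \<le> u s"
        by (simp add: u_def norm_mult mult_ac)
    qed
    then show ?thesis unfolding integral_unique[OF I] .
  qed
  moreover have "norm (f (\<gamma> r) * g (\<gamma> r)) \<le> M * norm (f (\<gamma> r))" "norm (f 0 * g 0) \<le> M * norm (f 0)"
    using fg \<gamma>(1)[of r] r by auto
  moreover have "S_op g f (\<gamma> r) = (H (\<gamma> r) - H (\<gamma> 0)) + f (\<gamma> r) * g (\<gamma> r) - f 0 * g 0"
    by (simp add: H_def \<gamma>_def S_op_def)
  ultimately have "norm (S_op g f (\<gamma> r)) \<le> M * norm (f (\<gamma> r)) + M * norm (f 0) + integral {0..r} u"
    by (smt (verit, best) norm_triangle_ineq4 norm_triangle_ineq)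
  then have "ennreal (norm (S_op g f (\<gamma> r)))
      \<le> ennreal (M * norm (f (\<gamma> r))) + ennreal (M * norm (f 0)) + ennreal (integral {0..r} u)"
    using M integral_nonneg[OF uint] r by (simp add: ennreal_plus[symmetric] u_def del: ennreal_plus)
  also have "ennreal (integral {0..r} u) = (\<integral>\<^sup>+s. ennreal (u s) * indicator {0..r} s \<partial>lborel)"
    using M r by (intro nn_integral_has_integral_lebesgue'[symmetric] integrable_integral uint)
      (auto simp: u_def)
  finally show ?thesis unfolding u_def \<gamma>_def .
qed

lemma ennpow_add3_le:
  assumes "0 < a"
  shows "ennpow (x + y + z) a \<le> ennreal (4 powr a) * (ennpow x a + ennpow y a + ennpow z a)"
proof -
  have "1 \<le> (2::real) powr a" using assms by (intro ge_one_powr_ge_zero) auto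
  then have "1 \<le> ennreal (2 powr a)" by simp
  then have "ennpow z a \<le> ennreal (2 powr a) * ennpow z a"
    using mult_right_mono[of 1 "ennreal (2 powr a)" "ennpow z a"] by simp
  have "ennpow ((x + y) + z) a \<le> ennreal (2 powr a) * (ennpow (x + y) a + ennpow z a)"
    by (rule ennpow_add_le[OF assms])
  also have "\<dots> \<le> ennreal (2 powr a) * (ennreal (2 powr a) * (ennpow x a + ennpow y a)
      + ennreal (2 powr a) * ennpow z a)"
    by (intro mult_left_mono add_mono ennpow_add_le assms \<open>ennpow z a \<le> _\<close>) simp
  also have "\<dots> = ennreal (2 powr a * 2 powr a) * (ennpow x a + ennpow y a + ennpow z a)"
    by (simp add: ennreal_mult algebra_simps)
  also have "(2::real) powr a * 2 powr a = 4 powr a"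
    by (simp add: powr_mult[symmetric])
  finally show ?thesis .
qed

lemma measurable_radial_norm:
  assumes "continuous_on (ball 0 1) f"
  shows "(\<lambda>s::real. norm (f (of_real s * cis \<theta>)) * indicator {0..<1} s) \<in> borel_measurable borel"
proof -
  have "continuous_on {-1<..<1} (\<lambda>s::real. f (of_real s * cis \<theta>))"
    by (rule continuous_on_compose2[OF assms]) (auto intro!: continuous_intros simp: norm_mult)
  then have "continuous_on {-1<..<1} (\<lambda>s::real. norm (f (of_real s * cis \<theta>)))"
    by (intro continuous_intros)
  then have "(\<lambda>s::real. indicator {-1<..<1} s *\<^sub>R norm (f (of_real s * cis \<theta>))) \<in> borel_measurable borel"
    by (rule borel_measurable_continuous_on_indicator[rotated]) auto
  then have "(\<lambda>s::real. indicator {-1<..<1} s *\<^sub>R norm (f (of_real s * cis \<theta>)) * indicator {0..<1} s)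
      \<in> borel_measurable borel"
    by measurable
  also have "(\<lambda>s::real. indicator {-1<..<1} s *\<^sub>R norm (f (of_real s * cis \<theta>)) * indicator {0..<1} s)
    = (\<lambda>s::real. norm (f (of_real s * cis \<theta>)) * indicator {0..<1} s)"
    by (auto simp: fun_eq_iff indicator_def)
  finally show ?thesis .
qed

lemma rm_inner_S_op_le:
  assumes holf: "f holomorphic_on ball 0 1" and holg: "g holomorphic_on ball 0 1"
    and gb: "\<And>z. z \<in> ball 0 1 \<Longrightarrow> norm (g z) \<le> M" and p: "1 \<le> p"
  shows "rm_inner p (S_op g f) \<theta> \<le> ennreal (4 powr p * (M powr p + p powr p * (2 * M) powr p)) * rm_inner p f \<theta>
            + ennreal ((4 * M * norm (f 0)) powr p)"
proof -
  have M: "0 \<le> M" using gb[of 0] norm_ge_zero[of "g 0"] by (simp del: norm_ge_zero)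
  define \<Phi> where "\<Phi> s = norm (f (of_real s * cis \<theta>)) * indicator {0..<1} s" for s :: real
  have \<Phi>m: "\<Phi> \<in> borel_measurable borel"
    unfolding \<Phi>_def by (intro measurable_radial_norm holomorphic_on_imp_continuous_on holf)
  then have [measurable]: "\<Phi> \<in> borel_measurable lborel" by (simp add: measurable_lborel1)
  have \<Phi>0: "0 \<le> \<Phi> s" for s by (simp add: \<Phi>_def)
  define A where "A r = (\<integral>\<^sup>+s. ennreal (2 * M * \<Phi> s / (1 - s)) * indicator {0..r} s \<partial>lborel)" for r
  have [measurable]: "A \<in> borel_measurable lborel"
    unfolding A_def by (rule measurable_nn_integral_Icc_upper) measurable
  define X where "X = rm_inner p f \<theta>"
  have X: "X = (\<integral>\<^sup>+r. ennreal (\<Phi> r powr p) * indicator {0..<1} r \<partial>lborel)"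
    unfolding X_def rm_inner_def by (intro nn_integral_cong) (auto simp: \<Phi>_def indicator_def)
  have scale: "(\<integral>\<^sup>+r. ennreal ((c * \<Phi> r) powr p) * indicator {0..<1} r \<partial>lborel) = ennreal (c powr p) * X"
    if "0 \<le> c" for c
    unfolding X using that \<Phi>0
    by (subst nn_integral_cmult[symmetric]) (auto simp: powr_mult ennreal_mult mult.assoc)
  have "ennpow (ennreal (norm (S_op g f (of_real r * cis \<theta>)))) p * indicator {0..<1} r
      \<le> ennreal (4 powr p) * (ennreal ((M * \<Phi> r) powr p) * indicator {0..<1} r
        + ennreal ((M * norm (f 0)) powr p) * indicator {0..<1} r + ennpow (A r) p * indicator {0..<1} r)"
    for r
  proof (cases "r \<in> {0..<1}")
    case True
    have "(\<integral>\<^sup>+s. ennreal (2 * M * norm (f (of_real s * cis \<theta>)) / (1 - s)) * indicator {0..r} s \<partial>lborel) = A r"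
      unfolding A_def using True by (intro nn_integral_cong) (auto simp: \<Phi>_def indicator_def)
    then have "ennreal (norm (S_op g f (of_real r * cis \<theta>)))
        \<le> ennreal (M * \<Phi> r) + ennreal (M * norm (f 0)) + A r"
      using norm_S_op_radial_le[OF holf holg gb, of r \<theta>] True by (simp add: \<Phi>_def)
    then have "ennpow (ennreal (norm (S_op g f (of_real r * cis \<theta>)))) p
        \<le> ennpow (ennreal (M * \<Phi> r) + ennreal (M * norm (f 0)) + A r) p"
      by (rule ennpow_mono) (use p in simp)
    also have "\<dots> \<le> ennreal (4 powr p) * (ennreal ((M * \<Phi> r) powr p) + ennreal ((M * norm (f 0)) powr p)
        + ennpow (A r) p)"
      using ennpow_add3_le[of p "ennreal (M * \<Phi> r)" "ennreal (M * norm (f 0))" "A r"] p M \<Phi>0[of r]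
      by (simp add: ennpow_ennreal)
    finally show ?thesis using True by simp
  qed simp
  then have "rm_inner p (S_op g f) \<theta> \<le> (\<integral>\<^sup>+r. ennreal (4 powr p) * (ennreal ((M * \<Phi> r) powr p) * indicator {0..<1} r
        + ennreal ((M * norm (f 0)) powr p) * indicator {0..<1} r + ennpow (A r) p * indicator {0..<1} r) \<partial>lborel)"
    unfolding rm_inner_def by (intro nn_integral_mono) (simp add: ennpow_ennreal)
  also have "\<dots> = ennreal (4 powr p) * (ennreal (M powr p) * X + ennreal ((M * norm (f 0)) powr p)
        + (\<integral>\<^sup>+r. ennpow (A r) p * indicator {0..<1} r \<partial>lborel))"
    using M by (simp add: nn_integral_add nn_integral_cmult nn_integral_cmult_indicator scale)
  also have "(\<integral>\<^sup>+r. ennpow (A r) p * indicator {0..<1} r \<partial>lborel) \<le> ennreal (p powr p) * ennreal ((2 * M) powr p) * X"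
    using Hardy_inequality[of "\<lambda>s. 2 * M * \<Phi> s" p] \<Phi>m \<Phi>0 M p scale[of "2 * M"]
    by (simp add: A_def mult.assoc)
  finally have "rm_inner p (S_op g f) \<theta> \<le> ennreal (4 powr p) * (ennreal (M powr p) * X
      + ennreal ((M * norm (f 0)) powr p) + ennreal (p powr p) * ennreal ((2 * M) powr p) * X)"
    by (simp add: mult_left_mono add_left_mono)
  also have "\<dots> = ennreal (4 powr p * (M powr p + p powr p * (2 * M) powr p)) * X
      + ennreal ((4 * M * norm (f 0)) powr p)"
  proof -
    have "ennreal (4 powr p * (M powr p + p powr p * (2 * M) powr p))
        = ennreal (4 powr p) * ennreal (M powr p) + ennreal (4 powr p) * ennreal (p powr p) * ennreal ((2 * M) powr p)"
      by (simp add: distrib_left ennreal_mult[symmetric] mult.assoc)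
    moreover have "ennreal ((4 * M * norm (f 0)) powr p) = ennreal (4 powr p) * ennreal ((M * norm (f 0)) powr p)"
      using M by (simp add: powr_mult ennreal_mult[symmetric] mult.assoc)
    ultimately show ?thesis
      by (simp only: distrib_left distrib_right mult.assoc add.assoc add.commute add.left_commute)
  qed
  finally show ?thesis unfolding X_def .
qed

lemma rm_norm_le_of_rm_inner_le:
  assumes contF: "continuous_on (ball 0 1) F" and p: "1 \<le> p" and q: "1 \<le> q"
    and K: "0 \<le> K" and c: "0 \<le> c"
    and le: "\<And>\<theta>. rm_inner p G \<theta> \<le> ennreal K * rm_inner p F \<theta> + ennreal c"
  shows "rm_norm p q G
    \<le> ennreal (2 powr (1/p + 1/q)) * (ennreal (K powr (1/p)) * rm_norm p q F + ennreal (c powr (1/p)))"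
proof -
  define t where "t = q / p"
  have t: "0 < t" using p q by (simp add: t_def)
  have [measurable]: "(\<lambda>\<theta>. ennpow (rm_inner p F \<theta>) t) \<in> borel_measurable lborel"
    using p by (intro measurable_ennpow measurable_rm_inner contF) auto
  have "ennpow (rm_inner p G \<theta>) t
      \<le> ennreal (2 powr t) * (ennreal (K powr t) * ennpow (rm_inner p F \<theta>) t + ennreal (c powr t))" for \<theta>
  proof -
    have "ennpow (rm_inner p G \<theta>) t \<le> ennpow (ennreal K * rm_inner p F \<theta> + ennreal c) t"
      using le t by (intro ennpow_mono) auto
    also have "\<dots> \<le> ennreal (2 powr t) * (ennpow (ennreal K * rm_inner p F \<theta>) t + ennpow (ennreal c) t)"
      by (rule ennpow_add_le[OF t])
    finally show ?thesis using K c t by (simp add: ennpow_mult ennpow_ennreal)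
  qed
  then have "rm_integral p q G \<le> (\<integral>\<^sup>+\<theta>. ennreal (2 powr t) * (ennreal (K powr t)
      * (ennpow (rm_inner p F \<theta>) t * indicator {0..2*pi} \<theta>) + ennreal (c powr t) * indicator {0..2*pi} \<theta>) \<partial>lborel)"
    unfolding rm_integral_def t_def[symmetric]
    by (intro nn_integral_mono) (auto simp: indicator_def)
  also have "\<dots> = ennreal (2 powr t) * (\<integral>\<^sup>+\<theta>. ennreal (K powr t) * (ennpow (rm_inner p F \<theta>) t
      * indicator {0..2*pi} \<theta>) + ennreal (c powr t) * indicator {0..2*pi} \<theta> \<partial>lborel)"
    by (rule nn_integral_cmult) measurable
  also have "\<dots> = ennreal (2 powr t) * (ennreal (K powr t) * rm_integral p q F
      + ennreal (c powr t) * ennreal (2 * pi))"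
    unfolding rm_integral_def t_def[symmetric]
    by (subst nn_integral_add) (measurable, simp add: nn_integral_cmult nn_integral_cmult_indicator)
  also have "\<dots> = ennreal (2 * pi) * (ennreal (2 powr t) * (ennreal (K powr t) * ennpow (rm_norm p q F) q
      + ennreal (c powr t)))"
    using q by (simp only: rm_integral_eq distrib_left mult.assoc mult.commute mult.left_commute)
  finally have "ennpow (rm_norm p q G) q
      \<le> ennreal (2 powr t) * (ennreal (K powr t) * ennpow (rm_norm p q F) q + ennreal (c powr t))"
    using q by (simp add: rm_integral_eq ennreal_mult_le_mult_iff)
  then have "ennpow (ennpow (rm_norm p q G) q) (1/q)
      \<le> ennpow (ennreal (2 powr t) * (ennreal (K powr t) * ennpow (rm_norm p q F) q + ennreal (c powr t))) (1/q)"
    by (rule ennpow_mono) (use q in simp)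
  also have "\<dots> \<le> ennreal (2 powr (t/q)) * (ennreal (2 powr (1/q)) *
      (ennpow (ennreal (K powr t) * ennpow (rm_norm p q F) q) (1/q) + ennpow (ennreal (c powr t)) (1/q)))"
    using q ennpow_add_le[of "1/q" "ennreal (K powr t) * ennpow (rm_norm p q F) q" "ennreal (c powr t)"]
    by (simp add: ennpow_mult ennpow_ennreal powr_powr mult_left_mono)
  also have "\<dots> = ennreal (2 powr (1/p + 1/q)) * (ennreal (K powr (1/p)) * rm_norm p q F + ennreal (c powr (1/p)))"
    using K c p q
    by (simp add: ennpow_mult ennpow_ennpow ennpow_ennreal powr_powr powr_add t_def ennreal_mult mult.assoc)
  finally show ?thesis using q by (simp add: ennpow_ennpow)
qed

lemma bounded_on_RM_S_op_if_bounded: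
  assumes p: "1 \<le> p" and q: "1 \<le> q" and holg: "g holomorphic_on ball 0 1"
    and gb: "\<And>z. z \<in> ball 0 1 \<Longrightarrow> norm (g z) \<le> M"
  shows "bounded_on_RM p q (S_op g)"
proof -
  have M: "0 \<le> M" using gb[of 0] norm_ge_zero[of "g 0"] by (simp del: norm_ge_zero)
  define K where "K = 4 powr p * (M powr p + p powr p * (2 * M) powr p)"
  define C where "C = 2 powr (1/p + 1/q) * (K powr (1/p) + 8 * M)"
  have K: "0 \<le> K" and C: "0 \<le> C" using M by (simp_all add: K_def C_def)
  have norm_le: "rm_norm p q (S_op g f) \<le> ennreal C * rm_norm p q f" if "f \<in> RM p q" for f
  proof -
    have holf: "f holomorphic_on ball 0 1" using that by (simp add: RM_def)
    have "rm_norm p q (S_op g f) \<le> ennreal (2 powr (1/p + 1/q))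
        * (ennreal (K powr (1/p)) * rm_norm p q f + ennreal (((4 * M * norm (f 0)) powr p) powr (1/p)))"
      using rm_inner_S_op_le[OF holf holg gb p]
      by (intro rm_norm_le_of_rm_inner_le holomorphic_on_imp_continuous_on holf p q K) (simp_all add: K_def)
    also have "((4 * M * norm (f 0)) powr p) powr (1/p) = 4 * M * norm (f 0)"
      using M p by (simp add: powr_powr)
    also have "ennreal (4 * M * norm (f 0)) \<le> ennreal (4 * M) * (2 * rm_norm p q f)"
      using mult_left_mono[OF norm_le_rm_norm[OF holf p q], of "ennreal (4 * M)"] M
      by (simp add: ennreal_mult)
    also have "ennreal (4 * M) * (2 * rm_norm p q f) = ennreal (8 * M) * rm_norm p q f"
      using M by (simp add: ennreal_mult[symmetric] mult.assoc[symmetric] ennreal_numeral[symmetric]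
          del: ennreal_numeral)
    also have "ennreal (2 powr (1/p + 1/q)) * (ennreal (K powr (1/p)) * rm_norm p q f
        + ennreal (8 * M) * rm_norm p q f) = ennreal C * rm_norm p q f"
      using M by (simp add: C_def ennreal_mult distrib_right mult.assoc)
    finally show ?thesis by (simp add: add_left_mono mult_left_mono)
  qed
  have "S_op g f \<in> RM p q" if "f \<in> RM p q" for f
  proof -
    have "rm_norm p q (S_op g f) < \<infinity>"
      using norm_le[OF that] that by (auto simp: RM_def ennreal_mult_less_top intro: le_less_trans)
    then show ?thesis
      using holomorphic_on_S_op[of f g] that holg by (simp add: RM_def)
  qed
  then show ?thesis unfolding bounded_on_RM_def using norm_le C by blast
qed

theorem proposition2:
  fixes p q :: real and g :: "complex \<Rightarrow> complex"
  assumes "1 \<le> p" and "1 \<le> q" and "g holomorphic_on ball 0 1"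
  shows "bounded_on_RM p q (S_op g) \<longleftrightarrow> bounded (g ` ball 0 1)"
proof
  assume "bounded_on_RM p q (S_op g)"
  then show "bounded (g ` ball 0 1)" by (rule bounded_if_bounded_on_RM_S_op[OF assms])
next
  assume "bounded (g ` ball 0 1)"
  then obtain M where "\<And>z. z \<in> ball 0 1 \<Longrightarrow> norm (g z) \<le> M"
    unfolding bounded_iff by blast
  then show "bounded_on_RM p q (S_op g)" by (rule bounded_on_RM_S_op_if_bounded[OF assms])
qed

end
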